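(* Let $G=(V,E)$ be a finite graph with no isolated vertices, with adjacency matrix $A$, degree matrix $D=\mathrm{diag}(d_u)$ and Laplacian $L=D-A$. Let $\boldsymbol\beta,\boldsymbol\gamma,\boldsymbol\lambda\in\mathbb R^V$ be such that $G$ has local $(\boldsymbol\beta,\boldsymbol\gamma,\boldsymbol\lambda)$-occupancy and for all $u\in V$: \[ \beta_u,\gamma_u,\lambda_u>0,\qquad d_u\frac{\gamma_u}{\beta_u}<1,\qquad \sum_{v\in N(u)}\frac{\gamma_v}{\beta_v}\le 1. \] Let $B=\mathrm{diag}(\boldsymbol\beta)$, $\Gamma=\mathrm{diag}(\boldsymbol\gamma)$ and $H=B+D\Gamma$. Then $B+A\Gamma$ is invertible, the vector $\mathbf y'=(B+A\Gamma)^{-1}\mathbf 1$ satisfies $\mathbf y'\ge\mathbf 0$ and $(B+A\Gamma)\mathbf y'\le\mathbf 1$ (i.e. it is feasible for the LP $\max\{\mathbf 1^{\mathsf T}\mathbf y:\ \mathbf y\ge\mathbf 0,\ (B+A\Gamma)\mathbf y\le\mathbf 1\}$), and moreover the spectral radius satisfies $\rho(L\Gamma H^{-1})<1$.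
   Context: Given $\boldsymbol\beta,\boldsymbol\gamma,\boldsymbol\lambda\in[0,\infty)^V$, $G$ has local $(\boldsymbol\beta,\boldsymbol\gamma,\boldsymbol\lambda)$-occupancy if for each $u\in V$, $\beta_u\Pr_{G,\boldsymbol\lambda}(u\in X)+\gamma_u\sum_{v\in N_G(u)}\Pr_{G,\boldsymbol\lambda}(v\in X)\ge1$, where $X$ is drawn from the hard-core model $\Pr_{G,\boldsymbol\lambda}(I)\propto\prod_{v\in I}\lambda_v$ on independent sets $I$ of $G$. Vector inequalities are entrywise; $\rho(T)$ is the maximum absolute value of an eigenvalue of $T$. *)

theory Defs
  imports "HOL-Analysis.Analysis"
begin

definition simple_graph :: "('v::finite \<Rightarrow> 'v \<Rightarrow> bool) \<Rightarrow> bool" where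
  "simple_graph E \<longleftrightarrow> (\<forall>u v. E u v \<longrightarrow> E v u) \<and> (\<forall>u. \<not> E u u)"

definition nbhd :: "('v \<Rightarrow> 'v \<Rightarrow> bool) \<Rightarrow> 'v \<Rightarrow> 'v set" where
  "nbhd E u = {v. E u v}"

definition degree :: "('v \<Rightarrow> 'v \<Rightarrow> bool) \<Rightarrow> 'v \<Rightarrow> nat" where
  "degree E u = card (nbhd E u)"

definition independent :: "('v \<Rightarrow> 'v \<Rightarrow> bool) \<Rightarrow> 'v set \<Rightarrow> bool" where
  "independent E I \<longleftrightarrow> (\<forall>u\<in>I. \<forall>v\<in>I. \<not> E u v)"

definition hc_weight :: "('v \<Rightarrow> real) \<Rightarrow> 'v set \<Rightarrow> real" where
  "hc_weight lam I = (\<Prod>v\<in>I. lam v)"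

definition hc_Z :: "('v::finite \<Rightarrow> 'v \<Rightarrow> bool) \<Rightarrow> ('v \<Rightarrow> real) \<Rightarrow> real" where
  "hc_Z E lam = (\<Sum>I\<in>{I. independent E I}. hc_weight lam I)"

definition hc_prob :: "('v::finite \<Rightarrow> 'v \<Rightarrow> bool) \<Rightarrow> ('v \<Rightarrow> real) \<Rightarrow> 'v \<Rightarrow> real" where
  "hc_prob E lam u = (\<Sum>I\<in>{I. independent E I \<and> u \<in> I}. hc_weight lam I) / hc_Z E lam"

definition local_occupancy ::
  "('v::finite \<Rightarrow> 'v \<Rightarrow> bool) \<Rightarrow> ('v \<Rightarrow> real) \<Rightarrow> ('v \<Rightarrow> real) \<Rightarrow> ('v \<Rightarrow> real) \<Rightarrow> bool" where
  "local_occupancy E beta gamma lam \<longleftrightarrow>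
     (\<forall>u. beta u * hc_prob E lam u + gamma u * (\<Sum>v\<in>nbhd E u. hc_prob E lam v) \<ge> 1)"

definition adj_mat :: "('v::finite \<Rightarrow> 'v \<Rightarrow> bool) \<Rightarrow> real^'v^'v" where
  "adj_mat E = (\<chi> i j. if E i j then 1 else 0)"

definition diag_mat :: "('v::finite \<Rightarrow> real) \<Rightarrow> real^'v^'v" where
  "diag_mat f = (\<chi> i j. if i = j then f i else 0)"

definition deg_mat :: "('v::finite \<Rightarrow> 'v \<Rightarrow> bool) \<Rightarrow> real^'v^'v" where
  "deg_mat E = diag_mat (\<lambda>u. real (degree E u))"

definition laplacian :: "('v::finite \<Rightarrow> 'v \<Rightarrow> bool) \<Rightarrow> real^'v^'v" where
  "laplacian E = deg_mat E - adj_mat E"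

definition cmat :: "real^'n^'m \<Rightarrow> complex^'n^'m" where
  "cmat T = (\<chi> i j. complex_of_real (T$i$j))"

definition spec_radius :: "real^'n::finite^'n \<Rightarrow> real" where
  "spec_radius T = Max {cmod z | z. det (mat z - cmat T) = 0}"

end

theory Submission
  imports Defs "HOL-Computational_Algebra.Fundamental_Theorem_Algebra"
begin

(* Write c v = gamma v / beta v.  Invertibility of M = B + A Gamma and nonnegativity of
   M^-1 1 both rest on one double-counting argument: if e >= 0 satisfies
   e u <= (SUM v in N(u). c v * e v) for all u, summing over u gives
   (SUM v. (1 - d v * c v) * e v) <= 0, so e = 0 because d v * c v < 1.
   For a kernel vector x take e = beta * |x|.  For the solution y, z = beta * y solves
   z u + (SUM v in N(u). c v * z v) = 1; as (SUM v in N(u). c v) <= 1, clamping z to [0,1]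
   changes it by such an e, so z already lies in [0,1].
   Every eigenvalue of L Gamma H^-1 is bounded in modulus by an absolute column sum of the
   matrix, and the column of v sums to 2 d v gamma v / (beta v + d v gamma v) < 1. *)

definition charpoly :: "'a::comm_ring_1^'n^'n \<Rightarrow> 'a poly" where
  "charpoly C = det (mat [:0, 1:] - (\<chi> i j. [:C$i$j:]))"

lemma poly_charpoly: "poly (charpoly C) z = det (mat z - C)"
proof -
  have "poly ((mat [:0, 1:] - (\<chi> i j. [:C$i$j:]))$i$j) z = (mat z - C)$i$j" for i j
    by (simp add: mat_def)
  then show ?thesis
    unfolding charpoly_def det_def by (simp add: poly_sum poly_prod of_int_poly)
qed

lemma degree_charpoly: "Polynomial.degree (charpoly (C::'a::idom^'n^'n)) = CARD('n)"
proof -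
  define Q where "Q = mat [:0, 1:] - (\<chi> i j. [:C$i$j:])"
  define t where "t p = of_int (sign p) * (\<Prod>i\<in>UNIV. Q$i$p i)" for p :: "'n \<Rightarrow> 'n"
  define S where "S = {p. p permutes (UNIV :: 'n set)} - {id}"
  \<comment> \<open>Only the identity permutation contributes a term of full degree.\<close>
  have split: "charpoly C = t id + sum t S"
    unfolding charpoly_def det_def Q_def[symmetric] t_def S_def
    by (subst sum.remove[of _ id]) (auto simp: finite_permutations permutes_id)
  have Q_diag: "Q$i$i = [:- C$i$i, 1:]" for i
    by (simp add: Q_def mat_def)
  have t_id: "Polynomial.degree (t id) = CARD('n)"
    by (simp add: t_def sign_id Q_diag degree_prod_eq_sum_degree)
  have "Polynomial.degree (t p) < CARD('n)" if "p \<in> S" for p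
  proof -
    from that obtain i where i: "p i \<noteq> i" by (auto simp: S_def fun_eq_iff)
    have "Polynomial.degree (t p) \<le> (\<Sum>j\<in>UNIV. Polynomial.degree (Q$j$p j))"
      using degree_mult_le[of "of_int (sign p)" "\<Prod>j\<in>UNIV. Q$j$p j"]
        degree_prod_sum_le[of UNIV "\<lambda>j. Q$j$p j"]
      by (simp add: t_def of_int_poly o_def)
    also have "\<dots> = (\<Sum>j\<in>UNIV - {i}. Polynomial.degree (Q$j$p j))"
      using i by (subst sum.remove[of _ i]) (auto simp: Q_def mat_def)
    also have "\<dots> \<le> (\<Sum>j\<in>UNIV - {i}. 1)"
      by (intro sum_mono) (auto simp: Q_def mat_def)
    also have "\<dots> < CARD('n)"
      by (simp add: card_Diff_singleton)
    finally show ?thesis .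
  qed
  then have "Polynomial.degree (sum t S) < CARD('n)"
    by (intro degree_sum_less) (auto simp: S_def)
  then show ?thesis
    unfolding split using t_id by (subst degree_add_eq_left) auto
qed

lemma finite_eigenvalues: "finite {z. det (mat z - (C::'a::idom^'n^'n)) = 0}"
proof -
  have "charpoly C \<noteq> 0"
    using degree_charpoly[of C] by (metis degree_0 zero_less_card_finite less_irrefl)
  then show ?thesis
    using poly_roots_finite[of "charpoly C"] by (simp add: poly_charpoly)
qed

lemma eigenvalue_exists: "\<exists>z. det (mat z - (C::complex^'n^'n)) = 0"
proof -
  have "\<not> constant (poly (charpoly C))"
    using degree_charpoly[of C] by (simp add: constant_degree)
  then show ?thesis
    using fundamental_theorem_of_algebra by (fastforce simp: poly_charpoly)
qed

lemma spec_radius_less_iff: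
  "spec_radius T < r \<longleftrightarrow> (\<forall>z. det (mat z - cmat T) = 0 \<longrightarrow> cmod z < r)"
proof -
  have "{cmod z | z. det (mat z - cmat T) = 0} = cmod ` {z. det (mat z - cmat T) = 0}"
    by auto
  then show ?thesis
    using finite_eigenvalues[of "cmat T"] eigenvalue_exists[of "cmat T"]
    unfolding spec_radius_def by auto
qed

lemma eigenvector_exists:
  fixes C :: "'a::field^'n^'n"
  assumes "det (mat z - C) = 0"
  obtains x where "x \<noteq> 0" and "C *v x = z *s x"
proof -
  have "\<not> invertible (mat z - C)"
    using assms invertible_det_nz by blast
  then obtain x where "(mat z - C) *v x = 0" and "x \<noteq> 0"
    using invertible_left_inverse matrix_left_invertible_ker by metis
  moreover have "mat z *v x = z *s x"
    by (simp add: vec_eq_iff matrix_vector_mult_def mat_def if_distrib[of "\<lambda>a. a * _"]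
        cong: if_cong)
  then have "(mat z - C) *v x = z *s x - C *v x"
    by (simp add: matrix_vector_mult_diff_rdistrib)
  ultimately show ?thesis
    using that by simp
qed

lemma eigenvalue_norm_less_column_sums:
  fixes K :: "real^'n^'n"
  assumes z: "det (mat z - cmat K) = 0" and col: "\<And>v. (\<Sum>u\<in>UNIV. \<bar>K$u$v\<bar>) < r"
  shows "cmod z < r"
proof -
  obtain x where "x \<noteq> 0" and x: "cmat K *v x = z *s x"
    using eigenvector_exists[OF z] .
  then obtain w where w: "x$w \<noteq> 0"
    by (metis vec_eq_iff zero_index)
  define S where "S = (\<Sum>v\<in>UNIV. cmod (x$v))"
  have row: "cmod z * cmod (x$u) \<le> (\<Sum>v\<in>UNIV. \<bar>K$u$v\<bar> * cmod (x$v))" for u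
  proof -
    have "z * x$u = (\<Sum>v\<in>UNIV. of_real (K$u$v) * x$v)"
      using arg_cong[OF x, of "\<lambda>y. y$u"] by (simp add: matrix_vector_mult_def cmat_def)
    then have "cmod z * cmod (x$u) = cmod (\<Sum>v\<in>UNIV. of_real (K$u$v) * x$v)"
      by (metis norm_mult)
    also have "\<dots> \<le> (\<Sum>v\<in>UNIV. cmod (of_real (K$u$v) * x$v))"
      by (rule norm_sum)
    also have "\<dots> = (\<Sum>v\<in>UNIV. \<bar>K$u$v\<bar> * cmod (x$v))"
      by (simp add: norm_mult)
    finally show ?thesis .
  qed
  have "cmod z * S \<le> (\<Sum>u\<in>UNIV. \<Sum>v\<in>UNIV. \<bar>K$u$v\<bar> * cmod (x$v))"
    unfolding S_def sum_distrib_left by (intro sum_mono row)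
  also have "\<dots> = (\<Sum>v\<in>UNIV. (\<Sum>u\<in>UNIV. \<bar>K$u$v\<bar>) * cmod (x$v))"
    by (subst sum.swap) (simp add: sum_distrib_right)
  also have "\<dots> < (\<Sum>v\<in>UNIV. r * cmod (x$v))"
  proof (rule sum_strict_mono_ex1)
    show "\<forall>v\<in>UNIV. (\<Sum>u\<in>UNIV. \<bar>K$u$v\<bar>) * cmod (x$v) \<le> r * cmod (x$v)"
      using col by (simp add: mult_right_mono less_imp_le)
    show "\<exists>v\<in>UNIV. (\<Sum>u\<in>UNIV. \<bar>K$u$v\<bar>) * cmod (x$v) < r * cmod (x$v)"
      using col[of w] w by (intro bexI[of _ w]) auto
  qed simp
  also have "\<dots> = r * S"
    by (simp add: S_def sum_distrib_left)
  finally have "cmod z * S < r * S" .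
  then show ?thesis
    by (rule mult_right_less_imp_less) (simp add: S_def sum_nonneg)
qed

lemma spec_radius_less_column_sums:
  fixes K :: "real^'n^'n"
  assumes "\<And>v. (\<Sum>u\<in>UNIV. \<bar>K$u$v\<bar>) < r"
  shows "spec_radius K < r"
  using eigenvalue_norm_less_column_sums assms spec_radius_less_iff by blast

lemma matrix_inv_right:
  fixes A :: "'a::field^'n^'n"
  assumes "invertible A"
  shows "A ** matrix_inv A = mat 1"
  using someI_ex[OF assms[unfolded invertible_def]] by (simp add: matrix_inv_def)

lemma matrix_inv_unique:
  fixes A :: "'a::field^'n^'n"
  assumes "A ** B = mat 1"
  shows "matrix_inv A = B"
proof -
  have "invertible A"
    using assms invertible_right_inverse by blast
  then have "matrix_inv A ** A = mat 1"
    using matrix_left_right_inverse matrix_inv_right by blast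
  then have "matrix_inv A = matrix_inv A ** (A ** B)"
    using assms by simp
  also have "\<dots> = B"
    by (simp add: matrix_mul_assoc \<open>matrix_inv A ** A = mat 1\<close>)
  finally show ?thesis .
qed

lemma diag_mat_mult_vec: "(diag_mat f *v x)$i = f i * x$i"
  by (simp add: matrix_vector_mult_def diag_mat_def if_distrib[of "\<lambda>a. a * _"] cong: if_cong)

lemma matrix_mul_diag_mat_right: "(X ** diag_mat f)$i$j = X$i$j * f j"
  by (simp add: matrix_matrix_mult_def diag_mat_def if_distrib[of "(*) _"] sum.delta' cong: if_cong)

lemma matrix_inv_diag_mat:
  assumes "\<And>i. f i \<noteq> 0"
  shows "matrix_inv (diag_mat f) = diag_mat (\<lambda>i. inverse (f i))"
  by (rule matrix_inv_unique)
    (simp add: vec_eq_iff matrix_mul_diag_mat_right, simp add: diag_mat_def mat_def assms)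

lemma adj_mat_mult_vec: "(adj_mat E *v x)$u = (\<Sum>v\<in>nbhd E u. x$v)"
  by (simp add: matrix_vector_mult_def adj_mat_def nbhd_def if_distrib[of "\<lambda>a. a * _"]
      sum.inter_filter[symmetric] cong: if_cong)

lemma diag_plus_adj_diag_mult_vec:
  "((diag_mat b + adj_mat E ** diag_mat g) *v x)$u = b u * x$u + (\<Sum>v\<in>nbhd E u. g v * x$v)"
  by (simp add: matrix_vector_mult_add_rdistrib matrix_vector_mul_assoc[symmetric]
      adj_mat_mult_vec diag_mat_mult_vec)

lemma sum_nbhd_eq_sum_degree:
  assumes "simple_graph E"
  shows "(\<Sum>u\<in>UNIV. \<Sum>v\<in>nbhd E u. f v) = (\<Sum>v\<in>UNIV. of_nat (degree E v) * f v)"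
proof -
  have "{u \<in> UNIV. E u v} = nbhd E v" for v
    using assms by (auto simp: simple_graph_def nbhd_def)
  then show ?thesis
    using sum.swap_restrict[of UNIV UNIV "\<lambda>u v. f v" E] by (simp add: nbhd_def degree_def)
qed

lemma laplacian_column_abs_sum:
  assumes "simple_graph E"
  shows "(\<Sum>u\<in>UNIV. \<bar>laplacian E $u$v\<bar>) = 2 * real (degree E v)"
proof -
  have "\<bar>laplacian E $u$v\<bar> = (if u = v then real (degree E v) else 0) + (if E v u then 1 else 0)" for u
    using assms by (auto simp: laplacian_def deg_mat_def diag_mat_def adj_mat_def simple_graph_def)
  then show ?thesis
    by (simp add: sum.distrib sum.inter_filter[symmetric] degree_def nbhd_def)
qed

lemma nbhd_dominated_eq_0:
  fixes c e :: "'v::finite \<Rightarrow> real"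
  assumes E: "simple_graph E"
    and deg: "\<And>v. real (degree E v) * c v < 1"
    and nonneg: "\<And>u. 0 \<le> e u"
    and dom: "\<And>u. e u \<le> (\<Sum>v\<in>nbhd E u. c v * e v)"
  shows "e u = 0"
proof -
  have "(\<Sum>v\<in>UNIV. e v) \<le> (\<Sum>u\<in>UNIV. \<Sum>v\<in>nbhd E u. c v * e v)"
    by (intro sum_mono dom)
  also have "\<dots> = (\<Sum>v\<in>UNIV. real (degree E v) * (c v * e v))"
    by (rule sum_nbhd_eq_sum_degree[OF E])
  finally have "(\<Sum>v\<in>UNIV. (1 - real (degree E v) * c v) * e v) \<le> 0"
    by (simp add: left_diff_distrib sum_subtractf mult.assoc)
  moreover have terms_nonneg: "0 \<le> (1 - real (degree E v) * c v) * e v" for v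
    using deg[of v] nonneg[of v] by simp
  ultimately have "(\<Sum>v\<in>UNIV. (1 - real (degree E v) * c v) * e v) = 0"
    by (meson antisym sum_nonneg terms_nonneg)
  then have "(1 - real (degree E u) * c u) * e u = 0"
    using terms_nonneg by (simp add: sum_nonneg_eq_0_iff)
  then show ?thesis
    using deg[of u] by simp
qed

lemma nbhd_system_solution_bounds:
  fixes c z :: "'v::finite \<Rightarrow> real"
  assumes E: "simple_graph E"
    and c_nonneg: "\<And>v. 0 \<le> c v"
    and deg: "\<And>v. real (degree E v) * c v < 1"
    and nbhd_sum: "\<And>u. (\<Sum>v\<in>nbhd E u. c v) \<le> 1"
    and z: "\<And>u. z u + (\<Sum>v\<in>nbhd E u. c v * z v) = 1"
  shows "0 \<le> z u \<and> z u \<le> 1"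
proof -
  define w where "w v = max 0 (min 1 (z v))" for v
  have dominated: "\<bar>z u - w u\<bar> \<le> (\<Sum>v\<in>nbhd E u. c v * \<bar>z v - w v\<bar>)" for u
  proof -
    define t where "t = 1 - (\<Sum>v\<in>nbhd E u. c v * w v)"
    have "(\<Sum>v\<in>nbhd E u. c v * w v) \<le> (\<Sum>v\<in>nbhd E u. c v)"
      using c_nonneg by (intro sum_mono) (simp add: w_def mult_left_le)
    moreover have "0 \<le> (\<Sum>v\<in>nbhd E u. c v * w v)"
      using c_nonneg by (intro sum_nonneg) (auto simp: w_def)
    ultimately have "0 \<le> t \<and> t \<le> 1"
      using nbhd_sum[of u] by (simp add: t_def)
    \<comment> \<open>\<open>w u\<close> is the point of \<open>[0, 1]\<close> nearest to \<open>z u\<close>.\<close>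
    then have "\<bar>z u - w u\<bar> \<le> \<bar>z u - t\<bar>"
      by (simp add: w_def max_def min_def abs_if)
    also have "z u - t = - (\<Sum>v\<in>nbhd E u. c v * (z v - w v))"
      using z[of u] by (simp add: t_def right_diff_distrib sum_subtractf)
    also have "\<bar>\<dots>\<bar> \<le> (\<Sum>v\<in>nbhd E u. c v * \<bar>z v - w v\<bar>)"
      using sum_abs[of "\<lambda>v. c v * (z v - w v)"] c_nonneg by (simp add: abs_mult)
    finally show ?thesis .
  qed
  have "\<bar>z u - w u\<bar> = 0"
    by (rule nbhd_dominated_eq_0[OF E deg _ dominated]) simp
  then show ?thesis
    by (auto simp: w_def max_def min_def split: if_splits)
qed

lemma invertible_diag_plus_adj_diag:
  assumes E: "simple_graph E"
    and b: "\<And>u. 0 < b u" and g: "\<And>u. 0 \<le> g u"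
    and deg: "\<And>u. real (degree E u) * (g u / b u) < 1"
  shows "invertible (diag_mat b + adj_mat E ** diag_mat g)"
proof -
  have "x = 0" if x: "(diag_mat b + adj_mat E ** diag_mat g) *v x = 0" for x
  proof -
    have dominated: "b u * \<bar>x$u\<bar> \<le> (\<Sum>v\<in>nbhd E u. g v / b v * (b v * \<bar>x$v\<bar>))" for u
    proof -
      have "b u * x$u = - (\<Sum>v\<in>nbhd E u. g v * x$v)"
        using arg_cong[OF x, of "\<lambda>y. y$u"] by (simp add: diag_plus_adj_diag_mult_vec eq_neg_iff_add_eq_0)
      then have "b u * \<bar>x$u\<bar> = \<bar>\<Sum>v\<in>nbhd E u. g v * x$v\<bar>"
        using b[of u] by (metis abs_minus_cancel abs_mult abs_of_pos)
      also have "\<dots> \<le> (\<Sum>v\<in>nbhd E u. g v * \<bar>x$v\<bar>)"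
        using sum_abs[of "\<lambda>v. g v * x$v"] g by (simp add: abs_mult)
      also have "\<dots> = (\<Sum>v\<in>nbhd E u. g v / b v * (b v * \<bar>x$v\<bar>))"
        using b by (intro sum.cong) (auto simp: less_imp_neq[symmetric])
      finally show ?thesis .
    qed
    have "b u * \<bar>x$u\<bar> = 0" for u
      by (rule nbhd_dominated_eq_0[OF E deg _ dominated]) (simp add: b less_imp_le)
    then show ?thesis
      using b by (simp add: vec_eq_iff less_imp_neq[symmetric])
  qed
  then show ?thesis
    using invertible_left_inverse matrix_left_invertible_ker by blast
qed

lemma diag_plus_adj_diag_solution_nonneg:
  assumes E: "simple_graph E"
    and b: "\<And>u. 0 < b u" and g: "\<And>u. 0 \<le> g u"
    and deg: "\<And>u. real (degree E u) * (g u / b u) < 1"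
    and nbhd_sum: "\<And>u. (\<Sum>v\<in>nbhd E u. g v / b v) \<le> 1"
    and y: "(diag_mat b + adj_mat E ** diag_mat g) *v y = (\<chi> i. 1)"
  shows "0 \<le> y$u"
proof -
  have system: "b u * y$u + (\<Sum>v\<in>nbhd E u. g v / b v * (b v * y$v)) = 1" for u
  proof -
    have "(\<Sum>v\<in>nbhd E u. g v / b v * (b v * y$v)) = (\<Sum>v\<in>nbhd E u. g v * y$v)"
      using b by (intro sum.cong) (auto simp: less_imp_neq[symmetric])
    then show ?thesis
      using arg_cong[OF y, of "\<lambda>x. x$u"] by (simp add: diag_plus_adj_diag_mult_vec)
  qed
  have "0 \<le> b u * y$u"
    using nbhd_system_solution_bounds[OF E _ deg nbhd_sum system] b g by (simp add: less_imp_le)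
  then show ?thesis
    using b[of u] by (simp add: zero_le_mult_iff)
qed

lemma spec_radius_laplacian_scaled_less_1:
  assumes E: "simple_graph E"
    and b: "\<And>u. 0 < b u" and g: "\<And>u. 0 \<le> g u"
    and deg: "\<And>u. real (degree E u) * (g u / b u) < 1"
  shows "spec_radius (laplacian E ** diag_mat g ** matrix_inv (diag_mat b + deg_mat E ** diag_mat g)) < 1"
    (is "spec_radius ?K < 1")
proof (rule spec_radius_less_column_sums)
  define h where "h u = b u + real (degree E u) * g u" for u
  have h_pos: "0 < h u" for u
    using b[of u] g[of u] by (simp add: h_def add_pos_nonneg)
  have "diag_mat b + deg_mat E ** diag_mat g = diag_mat h"
    by (simp add: vec_eq_iff matrix_mul_diag_mat_right) (simp add: deg_mat_def diag_mat_def h_def)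
  then have "matrix_inv (diag_mat b + deg_mat E ** diag_mat g) = diag_mat (\<lambda>u. inverse (h u))"
    using matrix_inv_diag_mat h_pos by (metis less_irrefl)
  then have entries: "?K$u$v = laplacian E $u$v * (g v / h v)" for u v
    by (simp add: matrix_mul_diag_mat_right divide_inverse)
  fix v
  have "(\<Sum>u\<in>UNIV. \<bar>laplacian E $u$v * (g v / h v)\<bar>) = (\<Sum>u\<in>UNIV. \<bar>laplacian E $u$v\<bar>) * (g v / h v)"
    using g[of v] h_pos[of v] by (simp add: abs_mult sum_distrib_right sum_divide_distrib)
  also have "\<dots> = 2 * real (degree E v) * g v / h v"
    by (simp add: laplacian_column_abs_sum[OF E])
  also have "\<dots> < 1"
    using deg[of v] b[of v] h_pos[of v] by (simp add: h_def field_simps)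
  finally show "(\<Sum>u\<in>UNIV. \<bar>?K$u$v\<bar>) < 1"
    by (simp add: entries)
qed

theorem lemma2p3:
  fixes E :: "'v::finite \<Rightarrow> 'v \<Rightarrow> bool"
    and beta gamma lam :: "'v \<Rightarrow> real"
  assumes "simple_graph E"
    and "\<forall>u. \<exists>v. E u v"
    and "local_occupancy E beta gamma lam"
    and "\<forall>u. beta u > 0 \<and> gamma u > 0 \<and> lam u > 0"
    and "\<forall>u. real (degree E u) * (gamma u / beta u) < 1"
    and "\<forall>u. (\<Sum>v\<in>nbhd E u. gamma v / beta v) \<le> 1"
  shows "let B = diag_mat beta; \<Gamma> = diag_mat gamma; A = adj_mat E;
             H = B + deg_mat E ** \<Gamma>; M = B + A ** \<Gamma>;
             y' = matrix_inv M *v (\<chi> i. 1)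
         in invertible M \<and> (\<forall>i. y' $ i \<ge> 0) \<and> (\<forall>i. (M *v y') $ i \<le> 1)
            \<and> spec_radius (laplacian E ** \<Gamma> ** matrix_inv H) < 1"
proof -
  note E = assms(1)
  have b: "\<And>u. 0 < beta u" and g: "\<And>u. 0 \<le> gamma u"
    using assms(4) by (auto simp: less_imp_le)
  have deg: "\<And>u. real (degree E u) * (gamma u / beta u) < 1"
    using assms(5) by blast
  have nbhd_sum: "\<And>u. (\<Sum>v\<in>nbhd E u. gamma v / beta v) \<le> 1"
    using assms(6) by blast
  define M where "M = diag_mat beta + adj_mat E ** diag_mat gamma"
  have inv: "invertible M"
    unfolding M_def using E b g deg by (rule invertible_diag_plus_adj_diag)
  have solution: "M *v (matrix_inv M *v (\<chi> i. 1)) = (\<chi> i. 1)"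
    using matrix_inv_right[OF inv] by (simp add: matrix_vector_mul_assoc)
  have nonneg: "0 \<le> (matrix_inv M *v (\<chi> i. 1))$i" for i
    using diag_plus_adj_diag_solution_nonneg[OF E b g deg nbhd_sum] solution by (simp add: M_def)
  show ?thesis
    unfolding Let_def M_def[symmetric]
    using inv solution nonneg spec_radius_laplacian_scaled_less_1[OF E b g deg] by simp
qed

end
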